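(* For $R>0$, let $s(R)=\tanh\frac R2$. Then the geodesic ball of radius $R$ about $\mathbf 0$ with respect to $g_{\tilde B}$ equals the Euclidean ball of radius $s(R)$ about $\mathbf 0$: $B^{g_{\tilde B}}_R(\mathbf 0)=B^{\mathbb R}_{s(R)}(\mathbf 0)$.
   Context: On the open unit ball $\mathbb B^{2n+2}\subset\mathbb R^{2n+2}\cong\mathbb C^{n+1}$ (coordinates $z_j=x_j+iy_j$, $r=|z|$), let $\theta=r^{-2}\sum_j(x_jdy_j-y_jdx_j)$ and let $g_{\tilde B}=\frac{4}{(1-r^2)^2}g_{\mathbb R}+\frac{16r^4}{(1-r^2)^4}\theta^2$ be the modified Bergman metric, where $g_{\mathbb R}$ is the Euclidean metric. *)

theory Defs
  imports "HOL-Analysis.Analysis"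
begin

text \<open>We identify \<real>^(2n+2) with \<complex>^(n+1), modelled as complex^'n for a finite index type 'n
  (so n+1 = CARD('n) \<ge> 1 is arbitrary). The norm and inner product of complex^'n are the
  Euclidean ones of \<real>^(2n+2), with z_j = x_j + i y_j.\<close>

definition theta_form :: "complex^'n \<Rightarrow> complex^'n \<Rightarrow> real" where
  "theta_form z v = (1 / (norm z)^2) * (\<Sum>j\<in>UNIV. Re (z$j) * Im (v$j) - Im (z$j) * Re (v$j))"

definition g_Btilde :: "complex^'n \<Rightarrow> complex^'n \<Rightarrow> complex^'n \<Rightarrow> real" where
  "g_Btilde z v w = 4 / (1 - (norm z)^2)^2 * (v \<bullet> w)
     + 16 * (norm z)^4 / (1 - (norm z)^2)^4 * theta_form z v * theta_form z w"

definition admissible_lengths :: "complex^'n \<Rightarrow> complex^'n \<Rightarrow> real set" where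
  "admissible_lengths p q = {L. \<exists>\<gamma>. \<gamma> piecewise_C1_differentiable_on {0..1} \<and>
      \<gamma> 0 = p \<and> \<gamma> 1 = q \<and> path_image \<gamma> \<subseteq> ball 0 1 \<and>
      ((\<lambda>t. sqrt (g_Btilde (\<gamma> t) (vector_derivative \<gamma> (at t)) (vector_derivative \<gamma> (at t))))
         has_integral L) {0..1}}"

definition dist_Btilde :: "complex^'n \<Rightarrow> complex^'n \<Rightarrow> real" where
  "dist_Btilde p q = Inf (admissible_lengths p q)"

definition geod_ball_Btilde :: "complex^'n \<Rightarrow> real \<Rightarrow> (complex^'n) set" where
  "geod_ball_Btilde x R = {p \<in> ball 0 1. dist_Btilde x p < R}"

end

theory Submission
  imports Defs
begin

text \<open>The metric dominates 4/(1-r^2)^2 times the Euclidean one, with equality on radial vectors,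
  where theta vanishes. For a unit vector u, the derivative of 2 artanh (gamma(t) . u) along a
  curve gamma in the ball is at most 2|gamma'|/(1-|gamma|^2), hence at most the g-length
  element; so every curve from 0 to p has length at least 2 artanh |p|, and the radial segment
  attains this. Thus the g-distance from 0 is 2 artanh r, and the g-ball of radius R is the
  Euclidean ball r < tanh (R/2).\<close>

lemma sqrt_g_Btilde_ge:
  fixes z v :: "complex^'n"
  assumes "norm z < 1"
  shows "2 * norm v / (1 - (norm z)^2) \<le> sqrt (g_Btilde z v v)"
proof -
  have pos: "1 - (norm z)^2 > 0"
    using assms by (simp add: abs_square_less_1)
  have "(2 * norm v / (1 - (norm z)^2))^2 = 4 / (1 - (norm z)^2)^2 * (v \<bullet> v)"
    by (simp add: power_divide power_mult_distrib power2_norm_eq_inner)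
  also have "\<dots> \<le> g_Btilde z v v"
    unfolding g_Btilde_def using pos by (simp add: mult.assoc)
  finally have "sqrt ((2 * norm v / (1 - (norm z)^2))^2) \<le> sqrt (g_Btilde z v v)"
    using real_sqrt_le_mono by blast
  then show ?thesis
    using pos by simp
qed

lemma sqrt_g_Btilde_eq_if_theta_form_eq_0:
  fixes z v :: "complex^'n"
  assumes "norm z < 1" and "theta_form z v = 0"
  shows "sqrt (g_Btilde z v v) = 2 * norm v / (1 - (norm z)^2)"
proof -
  have pos: "1 - (norm z)^2 > 0"
    using assms(1) by (simp add: abs_square_less_1)
  have "g_Btilde z v v = (2 * norm v / (1 - (norm z)^2))^2"
    unfolding g_Btilde_def assms(2)
    by (simp add: power_divide power_mult_distrib power2_norm_eq_inner)
  then show ?thesis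
    using pos by simp
qed

lemma theta_form_scaleR_self: "theta_form (t *\<^sub>R z) z = 0"
  unfolding theta_form_def by (simp add: algebra_simps)

lemma artanh_inner_derivative_le_sqrt_g_Btilde:
  fixes z u v :: "complex^'n"
  assumes z: "norm z < 1" and u: "norm u \<le> 1"
  shows "2 * (v \<bullet> u) / (1 - (z \<bullet> u)^2) \<le> sqrt (g_Btilde z v v)"
proof -
  have inner_le: "\<bar>x \<bullet> u\<bar> \<le> norm x" for x :: "complex^'n"
    using Cauchy_Schwarz_ineq2[of x u] u
    by (metis mult.comm_neutral mult_left_mono norm_ge_zero order.trans)
  have pos: "1 - (norm z)^2 > 0"
    using z by (simp add: abs_square_less_1)
  have sq_le: "(z \<bullet> u)^2 \<le> (norm z)^2"
    using inner_le[of z] by (metis abs_le_square_iff abs_norm_cancel)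
  have "2 * (v \<bullet> u) / (1 - (z \<bullet> u)^2) \<le> 2 * norm v / (1 - (z \<bullet> u)^2)"
    using inner_le[of v] pos sq_le by (intro divide_right_mono) auto
  also have "\<dots> \<le> 2 * norm v / (1 - (norm z)^2)"
    using pos sq_le by (intro divide_left_mono) auto
  also have "\<dots> \<le> sqrt (g_Btilde z v v)"
    by (rule sqrt_g_Btilde_ge[OF z])
  finally show ?thesis .
qed

lemma has_integral_artanh_inner_curve:
  fixes \<gamma> :: "real \<Rightarrow> 'a::real_inner"
  assumes "a \<le> b" and "\<gamma> piecewise_C1_differentiable_on {a..b}"
    and bounded: "\<And>t. t \<in> {a..b} \<Longrightarrow> \<bar>\<gamma> t \<bullet> u\<bar> < 1"
  shows "((\<lambda>t. (vector_derivative \<gamma> (at t) \<bullet> u) / (1 - (\<gamma> t \<bullet> u)^2))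
           has_integral artanh (\<gamma> b \<bullet> u) - artanh (\<gamma> a \<bullet> u)) {a..b}"
proof -
  obtain S where S: "finite S" and C1: "\<gamma> C1_differentiable_on {a..b} - S"
    and cont: "continuous_on {a..b} \<gamma>"
    using assms(2) unfolding piecewise_C1_differentiable_on_def by blast
  show ?thesis
  proof (rule fundamental_theorem_of_calculus_interior_strong[OF S \<open>a \<le> b\<close>])
    show "continuous_on {a..b} (\<lambda>t. artanh (\<gamma> t \<bullet> u))"
      using bounded by (intro continuous_intros cont) (force simp: abs_less_iff)+
  next
    fix t assume t: "t \<in> {a<..<b} - S"
    then have "t \<in> {a..b} - S"
      by auto
    then have "(\<gamma> has_vector_derivative vector_derivative \<gamma> (at t)) (at t)"
      using C1 unfolding C1_differentiable_on_def by (metis vector_derivative_at)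
    then have "((\<lambda>t. \<gamma> t \<bullet> u) has_real_derivative (vector_derivative \<gamma> (at t) \<bullet> u)) (at t)"
      unfolding has_vector_derivative_def has_field_derivative_def
      by (auto intro!: derivative_eq_intros simp: inner_scaleR_left)
    then have "((\<lambda>t. artanh (\<gamma> t \<bullet> u)) has_real_derivative
                 1 / (1 - (\<gamma> t \<bullet> u)^2) * (vector_derivative \<gamma> (at t) \<bullet> u)) (at t)"
      using bounded[of t] t by (intro DERIV_chain2[OF artanh_real_has_field_derivative]) auto
    then show "((\<lambda>t. artanh (\<gamma> t \<bullet> u)) has_vector_derivative
                 (vector_derivative \<gamma> (at t) \<bullet> u) / (1 - (\<gamma> t \<bullet> u)^2)) (at t)"
      by (simp add: has_real_derivative_iff_has_vector_derivative)
  qed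
qed

lemma inner_sgn_self:
  fixes x :: "'a::real_inner"
  shows "x \<bullet> sgn x = norm x"
  by (cases "x = 0") (simp_all add: sgn_div_norm power2_norm_eq_inner[symmetric] power2_eq_square)

lemma admissible_lengths_ge_artanh_inner:
  fixes p q u :: "complex^'n"
  assumes "L \<in> admissible_lengths p q" and u: "norm u \<le> 1"
  shows "2 * artanh (q \<bullet> u) - 2 * artanh (p \<bullet> u) \<le> L"
proof -
  obtain \<gamma> where pc: "\<gamma> piecewise_C1_differentiable_on {0..1}"
    and ends: "\<gamma> 0 = p" "\<gamma> 1 = q" and img: "path_image \<gamma> \<subseteq> ball 0 1"
    and length: "((\<lambda>t. sqrt (g_Btilde (\<gamma> t) (vector_derivative \<gamma> (at t))
                                         (vector_derivative \<gamma> (at t)))) has_integral L) {0..1}"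
    using assms(1) unfolding admissible_lengths_def by blast
  have in_ball: "norm (\<gamma> t) < 1" if "t \<in> {0..1}" for t
    using img that unfolding path_image_def by (force simp: subset_iff dist_norm)
  have bound: "\<bar>\<gamma> t \<bullet> u\<bar> < 1" if "t \<in> {0..1}" for t
    using Cauchy_Schwarz_ineq2[of "\<gamma> t" u] u in_ball[OF that]
    by (smt (verit, best) mult_left_le norm_ge_zero)
  have "((\<lambda>t. 2 * ((vector_derivative \<gamma> (at t) \<bullet> u) / (1 - (\<gamma> t \<bullet> u)^2)))
          has_integral 2 * (artanh (\<gamma> 1 \<bullet> u) - artanh (\<gamma> 0 \<bullet> u))) {0..1}"
    by (intro has_integral_mult_right has_integral_artanh_inner_curve pc bound) simp
  then have "2 * (artanh (\<gamma> 1 \<bullet> u) - artanh (\<gamma> 0 \<bullet> u)) \<le> L"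
    by (rule has_integral_le[OF _ length])
       (use artanh_inner_derivative_le_sqrt_g_Btilde[OF in_ball u] in auto)
  then show ?thesis
    using ends by simp
qed

lemma admissible_lengths_from_0_ge:
  fixes p :: "complex^'n"
  assumes "L \<in> admissible_lengths 0 p"
  shows "2 * artanh (norm p) \<le> L"
  using admissible_lengths_ge_artanh_inner[OF assms, of "sgn p"] by (simp add: norm_sgn inner_sgn_self)

lemma radial_length_in_admissible_lengths:
  fixes p :: "complex^'n"
  assumes p: "norm p < 1"
  shows "2 * artanh (norm p) \<in> admissible_lengths 0 p"
proof -
  define \<gamma> where "\<gamma> t = t *\<^sub>R p" for t :: real
  have deriv: "(\<gamma> has_vector_derivative p) (at t)" for t
    unfolding \<gamma>_def by (auto intro!: derivative_eq_intros)
  then have vd: "vector_derivative \<gamma> (at t) = p" for t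
    using vector_derivative_at by blast
  have pc: "\<gamma> piecewise_C1_differentiable_on {0..1}"
    by (rule C1_differentiable_imp_piecewise)
       (use deriv in \<open>auto simp: C1_differentiable_on_def intro!: exI[of _ "\<lambda>_. p"]\<close>)
  have norm_\<gamma>: "norm (\<gamma> t) = t * norm p" and in_ball: "norm (\<gamma> t) < 1" if "t \<in> {0..1}" for t
  proof -
    show "norm (\<gamma> t) = t * norm p"
      using that unfolding \<gamma>_def by simp
    also have "\<dots> \<le> norm p"
      using that by (simp add: mult_left_le_one_le)
    finally show "norm (\<gamma> t) < 1"
      using p by simp
  qed
  have inner_sgn: "\<gamma> t \<bullet> sgn p = t * norm p" for t
    unfolding \<gamma>_def by (simp add: inner_sgn_self)
  have "((\<lambda>t. 2 * ((vector_derivative \<gamma> (at t) \<bullet> sgn p) / (1 - (\<gamma> t \<bullet> sgn p)^2)))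
          has_integral 2 * (artanh (\<gamma> 1 \<bullet> sgn p) - artanh (\<gamma> 0 \<bullet> sgn p))) {0..1}"
    using in_ball norm_\<gamma>
    by (intro has_integral_mult_right has_integral_artanh_inner_curve pc) (auto simp: inner_sgn)
  then have "((\<lambda>t. 2 * norm p / (1 - (t * norm p)^2)) has_integral 2 * artanh (norm p)) {0..1}"
    by (simp add: vd inner_sgn inner_sgn_self)
  moreover have "2 * norm p / (1 - (t * norm p)^2) = sqrt (g_Btilde (\<gamma> t) p p)"
    if "t \<in> {0..1}" for t
    using sqrt_g_Btilde_eq_if_theta_form_eq_0[OF in_ball[OF that]] norm_\<gamma>[OF that]
    by (simp add: \<gamma>_def theta_form_scaleR_self power_mult_distrib)
  ultimately have "((\<lambda>t. sqrt (g_Btilde (\<gamma> t) (vector_derivative \<gamma> (at t))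
                                              (vector_derivative \<gamma> (at t))))
                      has_integral 2 * artanh (norm p)) {0..1}"
    unfolding vd by (rule has_integral_eq[rotated])
  moreover have "path_image \<gamma> \<subseteq> ball 0 1"
    unfolding path_image_def using in_ball by auto
  ultimately show ?thesis
    unfolding admissible_lengths_def using pc by (auto simp: \<gamma>_def)
qed

lemma dist_Btilde_0:
  fixes p :: "complex^'n"
  assumes "norm p < 1"
  shows "dist_Btilde 0 p = 2 * artanh (norm p)"
  unfolding dist_Btilde_def
  by (rule cInf_eq_minimum[OF radial_length_in_admissible_lengths[OF assms]])
     (rule admissible_lengths_from_0_ge)

lemma tanh_artanh_real:
  fixes x :: real
  assumes "\<bar>x\<bar> < 1"
  shows "tanh (artanh x) = x"
proof -
  have exp_artanh: "exp (- 2 * artanh x) = (1 - x) / (1 + x)"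
    unfolding artanh_def using assms by (simp add: exp_minus exp_ln)
  show ?thesis
    unfolding tanh_real_altdef exp_artanh using assms by (auto simp: field_simps)
qed

theorem lemma4p1:
  fixes R :: real
  assumes "R > 0"
  shows "geod_ball_Btilde (0 :: complex^'n) R = ball 0 (tanh (R / 2))"
proof -
  have "dist_Btilde 0 p < R \<longleftrightarrow> norm p < tanh (R / 2)" if p: "norm p < 1" for p :: "complex^'n"
  proof -
    have "dist_Btilde 0 p < R \<longleftrightarrow> artanh (norm p) < R / 2"
      using dist_Btilde_0[OF p] by linarith
    also have "\<dots> \<longleftrightarrow> tanh (artanh (norm p)) < tanh (R / 2)"
      by simp
    finally show ?thesis
      using p by (simp add: tanh_artanh_real)
  qed
  moreover have "tanh (R / 2) < 1"
    by (rule tanh_real_lt_1)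
  ultimately show ?thesis
    unfolding geod_ball_Btilde_def by auto
qed

end
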